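(* Let $x,y\in\mathfrak h$. The numbers $\exp(\alpha_i(x+\sqrt{-1}y))$, $i=1,\dots,l$, are all real if and only if $y=\sum_{i=1}^lk_iy_i$ for some integers $k_i$. Moreover, for each $i$ and each odd integer $k_i$, the element $h_i=\exp(\sqrt{-1}k_iy_i)$ lies in $\tilde G$ and satisfies $h_i^2=e$ and $h_i\neq e$.
   Context: $\mathfrak g$ is a real split semisimple Lie algebra of rank $l$ with split Cartan subalgebra $\mathfrak h$ and simple roots $\alpha_1,\dots,\alpha_l$ (extended complex-linearly to $\mathfrak h_{\mathbb C}$). $G_{\mathbb C}$ is the connected adjoint group of $\mathfrak g\otimes\mathbb C$, with exponential map $\exp:\mathfrak g\otimes\mathbb C\to G_{\mathbb C}$, and $\tilde G=\{g\in G_{\mathbb C}:\mathrm{Ad}(g)\mathfrak g\subset\mathfrak g\}$. For $i=1,\dots,l$, $y_i=2\pi m^\circ_{\alpha_i}/(\alpha_i,\alpha_i)$, where $(\,,)$ is the Killing form and $m^\circ_{\alpha_i}\in\mathfrak h$ corresponds via the Killing form to the fundamental weight $m_{\alpha_i}$; equivalently $y_i\in\mathfrak h$ is determined by $\alpha_j(y_i)=\pi\delta_{ij}$ for all $j$. *)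

theory Defs
  imports "HOL-Analysis.Analysis"
begin

text \<open>A finite-dimensional real Lie algebra g is modelled as real^'n with structure
  constants c (bracket [e_i,e_j] = sum_k c i j k e_k).  Its complexification is complex^'n
  with the same (real) structure constants.\<close>

definition brR :: "('n::finite \<Rightarrow> 'n \<Rightarrow> 'n \<Rightarrow> real) \<Rightarrow> real^'n \<Rightarrow> real^'n \<Rightarrow> real^'n" where
  "brR c X Y = (\<chi> k. \<Sum>i\<in>UNIV. \<Sum>j\<in>UNIV. X$i * Y$j * c i j k)"

definition brC :: "('n::finite \<Rightarrow> 'n \<Rightarrow> 'n \<Rightarrow> real) \<Rightarrow> complex^'n \<Rightarrow> complex^'n \<Rightarrow> complex^'n" where
  "brC c X Y = (\<chi> k. \<Sum>i\<in>UNIV. \<Sum>j\<in>UNIV. X$i * Y$j * complex_of_real (c i j k))"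

text \<open>Matrix of ad(Z) on the complexification: adC c Z *v W = brC c Z W.\<close>
definition adC :: "('n::finite \<Rightarrow> 'n \<Rightarrow> 'n \<Rightarrow> real) \<Rightarrow> complex^'n \<Rightarrow> complex^'n^'n" where
  "adC c Z = (\<chi> k j. \<Sum>i\<in>UNIV. Z$i * complex_of_real (c i j k))"

definition cplx :: "real^'n \<Rightarrow> complex^'n" where
  "cplx x = (\<chi> i. complex_of_real (x$i))"

definition is_lie_algebra :: "('n::finite \<Rightarrow> 'n \<Rightarrow> 'n \<Rightarrow> real) \<Rightarrow> bool" where
  "is_lie_algebra c \<longleftrightarrow> (\<forall>X. brR c X X = 0) \<and>
     (\<forall>X Y Z. brR c X (brR c Y Z) + brR c Y (brR c Z X) + brR c Z (brR c X Y) = 0)"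

definition bracket_set :: "('n::finite \<Rightarrow> 'n \<Rightarrow> 'n \<Rightarrow> real) \<Rightarrow> (real^'n) set \<Rightarrow> (real^'n) set \<Rightarrow> (real^'n) set" where
  "bracket_set c A B = span {brR c a b | a b. a \<in> A \<and> b \<in> B}"

fun derived_series :: "('n::finite \<Rightarrow> 'n \<Rightarrow> 'n \<Rightarrow> real) \<Rightarrow> (real^'n) set \<Rightarrow> nat \<Rightarrow> (real^'n) set" where
  "derived_series c I 0 = I"
| "derived_series c I (Suc m) = bracket_set c (derived_series c I m) (derived_series c I m)"

fun lower_central :: "('n::finite \<Rightarrow> 'n \<Rightarrow> 'n \<Rightarrow> real) \<Rightarrow> (real^'n) set \<Rightarrow> nat \<Rightarrow> (real^'n) set" where
  "lower_central c I 0 = I"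
| "lower_central c I (Suc m) = bracket_set c I (lower_central c I m)"

definition lie_subalgebra :: "('n::finite \<Rightarrow> 'n \<Rightarrow> 'n \<Rightarrow> real) \<Rightarrow> (real^'n) set \<Rightarrow> bool" where
  "lie_subalgebra c A \<longleftrightarrow> subspace A \<and> (\<forall>X\<in>A. \<forall>Y\<in>A. brR c X Y \<in> A)"

definition lie_ideal :: "('n::finite \<Rightarrow> 'n \<Rightarrow> 'n \<Rightarrow> real) \<Rightarrow> (real^'n) set \<Rightarrow> bool" where
  "lie_ideal c I \<longleftrightarrow> subspace I \<and> (\<forall>X. \<forall>Y\<in>I. brR c X Y \<in> I)"

definition solvable_lie :: "('n::finite \<Rightarrow> 'n \<Rightarrow> 'n \<Rightarrow> real) \<Rightarrow> (real^'n) set \<Rightarrow> bool" where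
  "solvable_lie c I \<longleftrightarrow> (\<exists>m. derived_series c I m = {0})"

definition nilpotent_lie :: "('n::finite \<Rightarrow> 'n \<Rightarrow> 'n \<Rightarrow> real) \<Rightarrow> (real^'n) set \<Rightarrow> bool" where
  "nilpotent_lie c I \<longleftrightarrow> (\<exists>m. lower_central c I m = {0})"

definition semisimple :: "('n::finite \<Rightarrow> 'n \<Rightarrow> 'n \<Rightarrow> real) \<Rightarrow> bool" where
  "semisimple c \<longleftrightarrow> is_lie_algebra c \<and> (\<forall>I. lie_ideal c I \<and> solvable_lie c I \<longrightarrow> I = {0})"

text \<open>Split Cartan subalgebra: a Cartan subalgebra (nilpotent, self-normalizing) such that
  ad(H) is diagonalizable over the reals for every H in it.\<close>
definition split_cartan :: "('n::finite \<Rightarrow> 'n \<Rightarrow> 'n \<Rightarrow> real) \<Rightarrow> (real^'n) set \<Rightarrow> bool" where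
  "split_cartan c h \<longleftrightarrow> lie_subalgebra c h \<and> nilpotent_lie c h \<and>
     {X. \<forall>H\<in>h. brR c H X \<in> h} = h \<and>
     (\<forall>H\<in>h. \<exists>B. independent B \<and> span B = UNIV \<and> (\<forall>v\<in>B. \<exists>\<mu>. brR c H v = \<mu> *\<^sub>R v))"

text \<open>Roots are linear functionals on h, represented as functions vanishing outside h.\<close>
definition is_root :: "('n::finite \<Rightarrow> 'n \<Rightarrow> 'n \<Rightarrow> real) \<Rightarrow> (real^'n) set \<Rightarrow> (real^'n \<Rightarrow> real) \<Rightarrow> bool" where
  "is_root c h \<alpha> \<longleftrightarrow> (\<forall>x. x \<notin> h \<longrightarrow> \<alpha> x = 0) \<and>
     (\<forall>x\<in>h. \<forall>y\<in>h. \<alpha> (x + y) = \<alpha> x + \<alpha> y) \<and> (\<forall>a. \<forall>x\<in>h. \<alpha> (a *\<^sub>R x) = a * \<alpha> x) \<and>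
     (\<exists>H\<in>h. \<alpha> H \<noteq> 0) \<and> (\<exists>X. X \<noteq> 0 \<and> (\<forall>H\<in>h. brR c H X = \<alpha> H *\<^sub>R X))"

definition simple_roots :: "('n::finite \<Rightarrow> 'n \<Rightarrow> 'n \<Rightarrow> real) \<Rightarrow> (real^'n) set \<Rightarrow> nat \<Rightarrow> (nat \<Rightarrow> real^'n \<Rightarrow> real) \<Rightarrow> bool" where
  "simple_roots c h l \<alpha> \<longleftrightarrow> (\<forall>i<l. is_root c h (\<alpha> i)) \<and>
     (\<forall>a::nat \<Rightarrow> real. (\<forall>x\<in>h. (\<Sum>i<l. a i * \<alpha> i x) = 0) \<longrightarrow> (\<forall>i<l. a i = 0)) \<and>
     (\<forall>\<beta>. is_root c h \<beta> \<longrightarrow> (\<exists>n::nat \<Rightarrow> int. ((\<forall>i<l. n i \<ge> 0) \<or> (\<forall>i<l. n i \<le> 0)) \<and>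
          \<beta> = (\<lambda>x. \<Sum>i<l. of_int (n i) * \<alpha> i x)))"

definition ycoroot :: "(real^'n) set \<Rightarrow> nat \<Rightarrow> (nat \<Rightarrow> real^'n \<Rightarrow> real) \<Rightarrow> nat \<Rightarrow> real^'n" where
  "ycoroot h l \<alpha> i = (THE y. y \<in> h \<and> (\<forall>j<l. \<alpha> j y = (if j = i then pi else 0)))"

fun mpow :: "complex^'n^'n \<Rightarrow> nat \<Rightarrow> complex^'n^'n" where
  "mpow A 0 = mat 1"
| "mpow A (Suc m) = A ** mpow A m"

definition mexp :: "complex^'n^'n \<Rightarrow> complex^'n^'n" where
  "mexp A = (\<Sum>m. (1 / fact m) *\<^sub>R mpow A m)"

text \<open>exp : g_C -> G_C; G_C (adjoint group) is identified with its faithful image Ad(G_C)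
  in GL(g_C), so exp(Z) = e^{ad Z}.\<close>
definition gexp :: "('n::finite \<Rightarrow> 'n \<Rightarrow> 'n \<Rightarrow> real) \<Rightarrow> complex^'n \<Rightarrow> complex^'n^'n" where
  "gexp c Z = mexp (adC c Z)"

inductive_set adjoint_group :: "('n::finite \<Rightarrow> 'n \<Rightarrow> 'n \<Rightarrow> real) \<Rightarrow> (complex^'n^'n) set"
  for c where
  one: "mat 1 \<in> adjoint_group c"
| step: "A \<in> adjoint_group c \<Longrightarrow> gexp c Z ** A \<in> adjoint_group c"

definition Gtilde :: "('n::finite \<Rightarrow> 'n \<Rightarrow> 'n \<Rightarrow> real) \<Rightarrow> (complex^'n^'n) set" where
  "Gtilde c = {g \<in> adjoint_group c. \<forall>x::real^'n. \<exists>x'. g *v cplx x = cplx x'}"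

end

theory Submission
  imports Defs
begin

(* The simple roots form a basis of the dual of h, so y |-> (alpha_i y)_i identifies h with
   R^l and the y_i with pi times the standard basis; as exp(alpha_i (x + i y)) is real exactly
   when alpha_i y lies in pi Z, this gives the first claim.
   A split Cartan subalgebra is abelian, so ad h is a commuting family of diagonalizable
   operators, and every eigenvalue of ad y_i is beta(y_i) for a root beta (or 0), an integer
   multiple of pi. Hence exp(i k ad y_i) acts by +1 or -1 on a real eigenbasis: it preserves the
   real form and squares to the identity, while for odd k it acts by exp(i pi k) = -1 on a root
   vector of alpha_i. *)

section \<open>Diagonalizable operators\<close>

definition diagonalizable :: "('a::real_vector \<Rightarrow> 'a) \<Rightarrow> bool" where
  "diagonalizable f \<longleftrightarrow>
     (\<exists>B. independent B \<and> span B = UNIV \<and> (\<forall>v\<in>B. \<exists>\<mu>. f v = \<mu> *\<^sub>R v))"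

lemma diagonalizableE:
  fixes f :: "'a::euclidean_space \<Rightarrow> 'a"
  assumes "diagonalizable f"
  obtains B \<mu> where "finite B" "independent B" "span B = UNIV" "\<And>v. v \<in> B \<Longrightarrow> f v = \<mu> v *\<^sub>R v"
proof -
  obtain B where B: "independent B" "span B = UNIV" and eig: "\<forall>v\<in>B. \<exists>\<mu>. f v = \<mu> *\<^sub>R v"
    using assms unfolding diagonalizable_def by blast
  from eig obtain \<mu> where "\<And>v. v \<in> B \<Longrightarrow> f v = \<mu> v *\<^sub>R v" by metis
  with B show thesis using that finiteI_independent by blast
qed

lemma funpow_eigenvector:
  assumes "linear f" "f v = \<mu> *\<^sub>R v"
  shows "(f ^^ m) v = (\<mu> ^ m) *\<^sub>R v"
  by (induction m) (simp_all add: assms linear_scale)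

lemma linear_funpow:
  fixes f :: "'a::real_vector \<Rightarrow> 'a"
  shows "linear f \<Longrightarrow> linear (f ^^ m)"
proof (induction m)
  case (Suc m)
  then show ?case using linear_compose[of "f ^^ m" f] by (simp add: o_def)
qed (simp add: linear_id)

lemma diagonalizable_funpow_eq_0:
  fixes f :: "'a::euclidean_space \<Rightarrow> 'a"
  assumes f: "linear f" "diagonalizable f" and w: "(f ^^ m) w = 0"
  shows "f w = 0"
proof -
  obtain B \<mu> where B: "finite B" "independent B" "span B = UNIV"
    and eig: "\<And>v. v \<in> B \<Longrightarrow> f v = \<mu> v *\<^sub>R v"
    using diagonalizableE[OF f(2)] by blast
  obtain u where wu: "w = (\<Sum>v\<in>B. u v *\<^sub>R v)"
    using span_finite[OF B(1)] B(3) by blast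
  have fm: "linear (f ^^ m)"
    using f(1) by (rule linear_funpow)
  have "(\<Sum>v\<in>B. (u v * \<mu> v ^ m) *\<^sub>R v) = (f ^^ m) w"
    unfolding wu linear_sum[OF fm]
    by (intro sum.cong refl) (simp add: linear_scale[OF fm] funpow_eigenvector[OF f(1) eig])
  then have "u v * \<mu> v ^ m = 0" if "v \<in> B" for v
    using w B(2) that unfolding independent_explicit by metis
  then have "u v * \<mu> v = 0" if "v \<in> B" for v
    using that by (cases "u v = 0") auto
  then show "f w = 0"
    unfolding wu linear_sum[OF f(1)] by (intro sum.neutral) (simp add: linear_scale[OF f(1)] eig)
qed

fun shift_product :: "('a::real_vector \<Rightarrow> 'a) \<Rightarrow> real list \<Rightarrow> 'a \<Rightarrow> 'a" where
  "shift_product f [] = id"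
| "shift_product f (\<mu> # \<mu>s) = shift_product f \<mu>s \<circ> (\<lambda>v. f v - \<mu> *\<^sub>R v)"

lemma linear_shift_product: "linear f \<Longrightarrow> linear (shift_product f \<mu>s)"
proof (induction \<mu>s)
  case (Cons \<mu> \<mu>s)
  have "linear (\<lambda>v. f v - \<mu> *\<^sub>R v)"
    using Cons.prems by (intro linear_compose_sub linear_scaleR)
  from linear_compose[OF this Cons.IH[OF Cons.prems]] show ?case by (simp add: o_def)
qed (simp add: linear_id)

lemma shift_product_eigenvector:
  assumes "linear f" "f v = \<mu> *\<^sub>R v"
  shows "shift_product f \<mu>s v = (\<Prod>m\<leftarrow>\<mu>s. \<mu> - m) *\<^sub>R v"
proof (induction \<mu>s)
  case (Cons m \<mu>s)
  have "f v - m *\<^sub>R v = (\<mu> - m) *\<^sub>R v"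
    using assms(2) by (simp add: scaleR_diff_left)
  then have "shift_product f (m # \<mu>s) v = (\<mu> - m) *\<^sub>R shift_product f \<mu>s v"
    using linear_scale[OF linear_shift_product[OF assms(1)]] by simp
  with Cons.IH show ?case by simp
qed simp

lemma shift_product_kernel_eigenvector:
  assumes W: "subspace W" "f ` W \<subseteq> W"
  shows "w \<in> W \<Longrightarrow> w \<noteq> 0 \<Longrightarrow> shift_product f \<mu>s w = 0 \<Longrightarrow>
    \<exists>X\<in>W. X \<noteq> 0 \<and> (\<exists>\<nu>. f X = \<nu> *\<^sub>R X)"
proof (induction \<mu>s arbitrary: w)
  case (Cons \<mu> \<mu>s)
  show ?case
  proof (cases "f w - \<mu> *\<^sub>R w = 0")
    case True
    then have "f w = \<mu> *\<^sub>R w"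
      by simp
    with Cons.prems(1,2) show ?thesis
      by blast
  next
    case False
    have "f w - \<mu> *\<^sub>R w \<in> W"
      using subspace_diff[OF W(1) _ subspace_scale[OF W(1)]] W(2) Cons.prems(1) by blast
    moreover have "shift_product f \<mu>s (f w - \<mu> *\<^sub>R w) = 0"
      using Cons.prems(3) by simp
    ultimately show ?thesis
      using Cons.IH False by blast
  qed
qed simp

text \<open>The product of the factors f - \<mu> over all eigenvalues annihilates the whole space;
  applying its factors to a nonzero vector of W one at a time, the last nonzero
  intermediate vector is an eigenvector lying in W.\<close>
lemma diagonalizable_invariant_subspace_eigenvector:
  fixes f :: "'a::euclidean_space \<Rightarrow> 'a"
  assumes f: "linear f" "diagonalizable f"
    and W: "subspace W" "f ` W \<subseteq> W" and w: "w \<in> W" "w \<noteq> 0"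
  shows "\<exists>X\<in>W. X \<noteq> 0 \<and> (\<exists>\<nu>. f X = \<nu> *\<^sub>R X)"
proof -
  obtain B \<mu> where B: "finite B" "independent B" "span B = UNIV"
    and eig: "\<And>v. v \<in> B \<Longrightarrow> f v = \<mu> v *\<^sub>R v"
    using diagonalizableE[OF f(2)] by blast
  from finite_list[OF finite_imageI[OF B(1)]] obtain \<mu>s where \<mu>s: "set \<mu>s = \<mu> ` B" ..
  have "shift_product f \<mu>s v = 0" if "v \<in> B" for v
  proof -
    have "\<mu> v \<in> set \<mu>s"
      using \<mu>s that by simp
    then have "0 \<in> set (map (\<lambda>m. \<mu> v - m) \<mu>s)"
      by (simp add: image_iff)
    then have "(\<Prod>m\<leftarrow>\<mu>s. \<mu> v - m) = 0"
      by (simp only: prod_list_zero_iff)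
    then show ?thesis using shift_product_eigenvector[OF f(1) eig[OF that]] by simp
  qed
  moreover have "w \<in> span B"
    by (simp only: B(3) UNIV_I)
  ultimately have "shift_product f \<mu>s w = 0"
    by (rule linear_eq_0_on_span[OF linear_shift_product[OF f(1)]])
  then show ?thesis
    by (rule shift_product_kernel_eigenvector[OF W w])
qed

lemma subspace_eigenspace: "linear f \<Longrightarrow> subspace {v. f v = \<nu> *\<^sub>R v}"
  unfolding subspace_def by (auto simp: linear_0 linear_add linear_scale algebra_simps)

text \<open>Induction on dim W: if some member f of F is not a scalar on W, then W meets an
  eigenspace of f in a proper F-invariant subspace, F being commutative.\<close>
lemma commuting_diagonalizable_common_eigenvector:
  fixes F :: "('a::euclidean_space \<Rightarrow> 'a) set"
  assumes lin: "\<forall>f\<in>F. linear f" and diag: "\<forall>f\<in>F. diagonalizable f"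
    and comm: "\<forall>f\<in>F. \<forall>g\<in>F. f \<circ> g = g \<circ> f"
    and W: "subspace W" "W \<noteq> {0}" "\<forall>f\<in>F. f ` W \<subseteq> W"
  shows "\<exists>X\<in>W. X \<noteq> 0 \<and> (\<forall>f\<in>F. \<exists>\<nu>. f X = \<nu> *\<^sub>R X)"
  using W
proof (induction "dim W" arbitrary: W rule: less_induct)
  case less
  obtain w where w: "w \<in> W" "w \<noteq> 0"
    using less.prems(1,2) subspace_0 by blast
  show ?case
  proof (cases "\<forall>f\<in>F. \<exists>\<nu>. \<forall>v\<in>W. f v = \<nu> *\<^sub>R v")
    case True
    then show ?thesis using w by blast
  next
    case False
    then obtain f where f: "f \<in> F" and not_scalar: "\<And>\<nu>. \<exists>v\<in>W. f v \<noteq> \<nu> *\<^sub>R v"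
      by blast
    have lin_f: "linear f"
      using lin f by blast
    obtain X \<nu> where X: "X \<in> W" "X \<noteq> 0" "f X = \<nu> *\<^sub>R X"
      using diagonalizable_invariant_subspace_eigenvector[OF lin_f bspec[OF diag f] less.prems(1)
          bspec[OF less.prems(3) f] w] by blast
    define W' where "W' = W \<inter> {v. f v = \<nu> *\<^sub>R v}"
    have sub: "subspace W'"
      unfolding W'_def by (rule subspace_inter[OF less.prems(1) subspace_eigenspace[OF lin_f]])
    have nonzero: "W' \<noteq> {0}"
      using X unfolding W'_def by blast
    have "g ` W' \<subseteq> W'" if g: "g \<in> F" for g
    proof (rule image_subsetI)
      fix v assume v: "v \<in> W'"
      have "f (g v) = g (f v)"
        using fun_cong[OF bspec[OF bspec[OF comm f] g], of v] by simp
      also have "\<dots> = \<nu> *\<^sub>R g v"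
        using v linear_scale[OF bspec[OF lin g]] unfolding W'_def by simp
      finally have "f (g v) = \<nu> *\<^sub>R g v" .
      moreover have "g v \<in> W"
        using bspec[OF less.prems(3) g] v unfolding W'_def by blast
      ultimately show "g v \<in> W'"
        unfolding W'_def by simp
    qed
    then have inv: "\<forall>g\<in>F. g ` W' \<subseteq> W'"
      by blast
    have smaller: "dim W' < dim W"
    proof (rule dim_psubset)
      obtain v where "v \<in> W" "v \<notin> W'"
        using not_scalar[of \<nu>] unfolding W'_def by blast
      then have "W' \<subset> W"
        unfolding W'_def by blast
      then show "span W' \<subset> span W"
        using \<open>subspace W'\<close> less.prems(1) by (simp add: span_eq_iff[THEN iffD2])
    qed
    obtain Y where "Y \<in> W'" "Y \<noteq> 0" "\<forall>g\<in>F. \<exists>\<nu>. g Y = \<nu> *\<^sub>R Y"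
      using less.hyps[of W'] smaller sub nonzero inv by blast
    then show ?thesis unfolding W'_def by blast
  qed
qed

section \<open>Linear functionals on a subspace\<close>

definition linear_functional_on :: "'a::real_vector set \<Rightarrow> ('a \<Rightarrow> real) \<Rightarrow> bool" where
  "linear_functional_on S f \<longleftrightarrow>
     (\<forall>x\<in>S. \<forall>y\<in>S. f (x + y) = f x + f y) \<and> (\<forall>a. \<forall>x\<in>S. f (a *\<^sub>R x) = a * f x)"

lemma linear_functional_on_add:
  "linear_functional_on S f \<Longrightarrow> x \<in> S \<Longrightarrow> y \<in> S \<Longrightarrow> f (x + y) = f x + f y"
  unfolding linear_functional_on_def by blast

lemma linear_functional_on_scale:
  "linear_functional_on S f \<Longrightarrow> x \<in> S \<Longrightarrow> f (a *\<^sub>R x) = a * f x"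
  unfolding linear_functional_on_def by blast

lemma linear_functional_on_0:
  assumes "subspace S" "linear_functional_on S f"
  shows "f 0 = 0"
  using linear_functional_on_scale[OF assms(2) subspace_0[OF assms(1)], of 0] by simp

lemma linear_functional_on_diff:
  assumes "subspace S" "linear_functional_on S f" "x \<in> S" "y \<in> S"
  shows "f (x - y) = f x - f y"
  using linear_functional_on_add[OF assms(2) subspace_diff[OF assms(1,3,4)] assms(4)] by simp

lemma linear_functional_on_sum:
  assumes "subspace S" "linear_functional_on S f" "\<And>i. i \<in> I \<Longrightarrow> g i \<in> S"
  shows "f (\<Sum>i\<in>I. g i) = (\<Sum>i\<in>I. f (g i))"
  using assms(3)
proof (induction I rule: infinite_finite_induct)
  case (insert i I)
  have "sum g I \<in> S"
    using insert.prems by (intro subspace_sum[OF assms(1)]) auto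
  with insert show ?case
    by (simp add: linear_functional_on_add[OF assms(2)])
qed (simp_all add: linear_functional_on_0[OF assms(1,2)])

lemma linear_functional_on_inner_representation:
  fixes S :: "'a::euclidean_space set"
  assumes S: "subspace S" and f: "linear_functional_on S f"
  shows "\<exists>v\<in>S. \<forall>y\<in>S. f y = v \<bullet> y"
proof -
  obtain B where B: "B \<subseteq> S" "pairwise orthogonal B" "\<And>x. x \<in> B \<Longrightarrow> norm x = 1"
      "independent B" "card B = dim S" "span B = S"
    using orthonormal_basis_subspace[OF S] by blast
  have fin: "finite B"
    using B(4) by (rule finiteI_independent)
  define v where "v = (\<Sum>b\<in>B. f b *\<^sub>R b)"
  have "v \<in> S"
    unfolding v_def using B(1) by (intro subspace_sum[OF S] subspace_scale[OF S]) auto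
  moreover have "f y = v \<bullet> y" if y: "y \<in> S" for y
  proof -
    have "f y = f (\<Sum>b\<in>B. (y \<bullet> b) *\<^sub>R b)"
      using orthonormal_basis_expand[OF B(2,3) _ fin] y B(6) by simp
    also have "\<dots> = (\<Sum>b\<in>B. f ((y \<bullet> b) *\<^sub>R b))"
      using B(1) by (intro linear_functional_on_sum[OF S f] subspace_scale[OF S]) auto
    also have "\<dots> = v \<bullet> y"
      unfolding v_def inner_sum_left using B(1) linear_functional_on_scale[OF f]
      by (intro sum.cong) (auto simp: inner_commute)
    finally show ?thesis .
  qed
  ultimately show ?thesis
    by blast
qed

section \<open>Split Cartan subalgebras\<close>

lemma brR_add_left: "brR c (X + Y) Z = brR c X Z + brR c Y Z"
  by (simp add: brR_def vec_eq_iff algebra_simps sum.distrib)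

lemma brR_add_right: "brR c X (Y + Z) = brR c X Y + brR c X Z"
  by (simp add: brR_def vec_eq_iff algebra_simps sum.distrib)

lemma brR_scaleR_left: "brR c (a *\<^sub>R X) Y = a *\<^sub>R brR c X Y"
  by (simp add: brR_def vec_eq_iff sum_distrib_left mult_ac)

lemma brR_scaleR_right: "brR c X (a *\<^sub>R Y) = a *\<^sub>R brR c X Y"
  by (simp add: brR_def vec_eq_iff sum_distrib_left mult_ac)

lemma linear_brR: "linear (brR c X)"
  by (rule linearI) (simp_all add: brR_add_right brR_scaleR_right)

lemma brR_antisym:
  assumes "is_lie_algebra c"
  shows "brR c X Y = - brR c Y X"
proof -
  have "brR c (X + Y) (X + Y) = 0" "brR c X X = 0" "brR c Y Y = 0"
    using assms by (auto simp: is_lie_algebra_def)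
  then show ?thesis
    by (simp add: brR_add_left brR_add_right eq_neg_iff_add_eq_0 add.commute)
qed

lemma split_cartan_subspace: "split_cartan c h \<Longrightarrow> subspace h"
  by (simp add: split_cartan_def lie_subalgebra_def)

lemma split_cartan_diagonalizable: "split_cartan c h \<Longrightarrow> H \<in> h \<Longrightarrow> diagonalizable (brR c H)"
  unfolding split_cartan_def diagonalizable_def by blast

lemma funpow_brR_in_lower_central:
  assumes "H \<in> h" "w \<in> h"
  shows "(brR c H ^^ j) w \<in> lower_central c h j"
proof (induction j)
  case (Suc j)
  then have "brR c H ((brR c H ^^ j) w) \<in> {brR c a b | a b. a \<in> h \<and> b \<in> lower_central c h j}"
    using assms(1) by blast
  then show ?case
    unfolding lower_central.simps bracket_set_def by (simp add: span_base)
qed (simp add: assms(2))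

text \<open>ad H is nilpotent on the nilpotent algebra h, and diagonalizable; so it vanishes there.\<close>
lemma split_cartan_brR_eq_0:
  assumes sc: "split_cartan c h" and "H \<in> h" "w \<in> h"
  shows "brR c H w = 0"
proof -
  obtain m where "lower_central c h m = {0}"
    using sc by (auto simp: split_cartan_def nilpotent_lie_def)
  then have "(brR c H ^^ m) w = 0"
    using funpow_brR_in_lower_central[OF assms(2,3), where c = c and j = m] by simp
  then show ?thesis
    using diagonalizable_funpow_eq_0[OF linear_brR split_cartan_diagonalizable[OF sc \<open>H \<in> h\<close>]] by blast
qed

lemma split_cartan_brR_commute:
  assumes L: "is_lie_algebra c" and sc: "split_cartan c h" and "H \<in> h" "H' \<in> h"
  shows "brR c H (brR c H' v) = brR c H' (brR c H v)"
proof -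
  have "brR c H (brR c H' v) + brR c H' (brR c v H) + brR c v (brR c H H') = 0"
    using L unfolding is_lie_algebra_def by blast
  moreover have "brR c H H' = 0"
    using split_cartan_brR_eq_0[OF sc assms(3,4)] .
  moreover have "brR c H' (brR c v H) = - brR c H' (brR c H v)"
    using brR_antisym[OF L, of v H] linear_neg[OF linear_brR] by metis
  ultimately show ?thesis
    by (simp add: linear_0[OF linear_brR])
qed

text \<open>A common eigenvector of the commuting diagonalizable family ad h inside the
  eigenspace of ad y.\<close>
lemma split_cartan_weight_vector:
  assumes L: "is_lie_algebra c" and sc: "split_cartan c h" and y: "y \<in> h"
    and b: "b \<noteq> 0" "brR c y b = \<mu> *\<^sub>R b"
  obtains \<phi> X where "X \<noteq> 0" "\<phi> y = \<mu>" "\<And>H. H \<in> h \<Longrightarrow> brR c H X = \<phi> H *\<^sub>R X"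
    "\<And>x. x \<notin> h \<Longrightarrow> \<phi> x = 0" "linear_functional_on h \<phi>"
proof -
  have h: "subspace h"
    using sc by (rule split_cartan_subspace)
  define W where "W = {v. brR c y v = \<mu> *\<^sub>R v}"
  have W: "subspace W" "W \<noteq> {0}"
    unfolding W_def using subspace_eigenspace[OF linear_brR] b by auto
  have lin: "\<forall>f\<in>brR c ` h. linear f"
    using linear_brR by blast
  have diag: "\<forall>f\<in>brR c ` h. diagonalizable f"
    using split_cartan_diagonalizable[OF sc] by blast
  have comm: "\<forall>f\<in>brR c ` h. \<forall>g\<in>brR c ` h. f \<circ> g = g \<circ> f"
    using split_cartan_brR_commute[OF L sc] by fastforce
  have inv: "\<forall>f\<in>brR c ` h. f ` W \<subseteq> W"
    using split_cartan_brR_commute[OF L sc y] brR_scaleR_right unfolding W_def by auto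
  obtain X where X: "X \<in> W" "X \<noteq> 0" and ev: "\<forall>f\<in>brR c ` h. \<exists>\<nu>. f X = \<nu> *\<^sub>R X"
    using commuting_diagonalizable_common_eigenvector[OF lin diag comm W inv] by blast
  define \<phi> where "\<phi> H = (if H \<in> h then SOME \<nu>. brR c H X = \<nu> *\<^sub>R X else 0)" for H
  have \<phi>: "brR c H X = \<phi> H *\<^sub>R X" if "H \<in> h" for H
    using someI_ex[of "\<lambda>\<nu>. brR c H X = \<nu> *\<^sub>R X"] ev that unfolding \<phi>_def by auto
  have lin: "linear_functional_on h \<phi>"
    unfolding linear_functional_on_def
  proof (intro conjI ballI allI)
    fix x z assume "x \<in> h" "z \<in> h"
    then have "\<phi> (x + z) *\<^sub>R X = (\<phi> x + \<phi> z) *\<^sub>R X"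
      using \<phi>[symmetric] subspace_add[OF h] by (simp add: brR_add_left scaleR_add_left)
    then show "\<phi> (x + z) = \<phi> x + \<phi> z"
      using X(2) by simp
  next
    fix a x assume "x \<in> h"
    then have "\<phi> (a *\<^sub>R x) *\<^sub>R X = (a * \<phi> x) *\<^sub>R X"
      using \<phi>[symmetric] subspace_scale[OF h] by (simp add: brR_scaleR_left flip: scaleR_scaleR)
    then show "\<phi> (a *\<^sub>R x) = a * \<phi> x"
      using X(2) by simp
  qed
  have "\<phi> y = \<mu>"
    using X \<phi>[OF y] unfolding W_def by simp
  moreover have "\<phi> x = 0" if "x \<notin> h" for x
    using that unfolding \<phi>_def by simp
  ultimately show thesis
    using that[OF X(2) _ \<phi> _ lin] by blast
qed

lemma split_cartan_ad_eigenvalue: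
  assumes L: "is_lie_algebra c" and sc: "split_cartan c h" and y: "y \<in> h"
    and b: "b \<noteq> 0" "brR c y b = \<mu> *\<^sub>R b"
  shows "\<mu> = 0 \<or> (\<exists>\<beta>. is_root c h \<beta> \<and> \<mu> = \<beta> y)"
proof -
  obtain \<phi> X where X: "X \<noteq> 0" "\<phi> y = \<mu>" "\<And>H. H \<in> h \<Longrightarrow> brR c H X = \<phi> H *\<^sub>R X"
    "\<And>x. x \<notin> h \<Longrightarrow> \<phi> x = 0" "linear_functional_on h \<phi>"
    using split_cartan_weight_vector[OF L sc y b] by blast
  show ?thesis
  proof (cases "\<exists>H\<in>h. \<phi> H \<noteq> 0")
    case True
    then have "is_root c h \<phi>"
      using X unfolding is_root_def linear_functional_on_def by blast
    with X(2) show ?thesis by blast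
  next
    case False
    with X(2) y show ?thesis by blast
  qed
qed

section \<open>The coroot lattice\<close>

text \<open>The functionals \<alpha> 0, ..., \<alpha> (l - 1) form a basis of the dual of h; ycoroot h l \<alpha>
  is then \<pi> times the dual basis of h.\<close>
locale dual_space_basis =
  fixes h :: "(real^'n::finite) set" and l :: nat and \<alpha> :: "nat \<Rightarrow> real^'n \<Rightarrow> real"
  assumes subspace_h: "subspace h"
    and l_eq_dim: "l = dim h"
    and linear_functional: "i < l \<Longrightarrow> linear_functional_on h (\<alpha> i)"
    and functionals_independent:
      "(\<And>x. x \<in> h \<Longrightarrow> (\<Sum>i<l. a i * \<alpha> i x) = 0) \<Longrightarrow> i < l \<Longrightarrow> a i = 0"
begin

definition repr :: "nat \<Rightarrow> real^'n" where
  "repr i = (SOME v. v \<in> h \<and> (\<forall>y\<in>h. \<alpha> i y = v \<bullet> y))"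

lemma repr:
  assumes "i < l"
  shows "repr i \<in> h" "\<And>y. y \<in> h \<Longrightarrow> \<alpha> i y = repr i \<bullet> y"
proof -
  have "\<exists>v. v \<in> h \<and> (\<forall>y\<in>h. \<alpha> i y = v \<bullet> y)"
    using linear_functional_on_inner_representation[OF subspace_h linear_functional[OF assms]] by blast
  from someI_ex[OF this] show "repr i \<in> h" "\<And>y. y \<in> h \<Longrightarrow> \<alpha> i y = repr i \<bullet> y"
    unfolding repr_def by blast+
qed

lemma repr_combination_eq_0:
  assumes "(\<Sum>i<l. a i *\<^sub>R repr i) = 0" "i < l"
  shows "a i = 0"
proof (rule functionals_independent[OF _ assms(2)])
  fix x assume "x \<in> h"
  then have "(\<Sum>i<l. a i * \<alpha> i x) = (\<Sum>i<l. a i *\<^sub>R repr i) \<bullet> x"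
    by (simp add: repr(2) inner_sum_left)
  with assms(1) show "(\<Sum>i<l. a i * \<alpha> i x) = 0"
    by simp
qed

lemma inj_on_repr: "inj_on repr {..<l}"
proof (rule inj_onI, rule ccontr)
  fix i j assume ij: "i \<in> {..<l}" "j \<in> {..<l}" "repr i = repr j" "i \<noteq> j"
  let ?a = "\<lambda>k. if k = i then 1 else if k = j then -1 else (0::real)"
  have "(\<Sum>k<l. ?a k *\<^sub>R repr k) = repr i - repr j"
    using ij by (simp add: if_distrib[of "\<lambda>r. r *\<^sub>R _"] sum.If_cases Int_absorb1 insert_Diff_if)
  then have "?a i = 0"
    using ij by (intro repr_combination_eq_0) auto
  then show False by simp
qed

lemma independent_repr: "independent (repr ` {..<l})"
proof
  assume "dependent (repr ` {..<l})"
  then obtain u where u: "\<exists>v\<in>repr ` {..<l}. u v \<noteq> 0" "(\<Sum>v\<in>repr ` {..<l}. u v *\<^sub>R v) = 0"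
    by (auto simp: dependent_finite)
  then have "(\<Sum>i<l. u (repr i) *\<^sub>R repr i) = 0"
    by (simp add: sum.reindex[OF inj_on_repr])
  with u(1) show False
    using repr_combination_eq_0[of "\<lambda>i. u (repr i)"] by auto
qed

lemma span_repr: "span (repr ` {..<l}) = h"
proof
  show "span (repr ` {..<l}) \<subseteq> h"
    using repr(1) by (intro span_minimal subspace_h) auto
  show "h \<subseteq> span (repr ` {..<l})"
    using repr(1) independent_repr l_eq_dim card_image[OF inj_on_repr]
    by (intro card_ge_dim_independent) auto
qed

lemma eq_0_if_functionals_vanish:
  assumes y: "y \<in> h" and vanish: "\<And>j. j < l \<Longrightarrow> \<alpha> j y = 0"
  shows "y = 0"
proof -
  have "orthogonal y y"
  proof (rule orthogonal_to_span)
    show "y \<in> span (repr ` {..<l})"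
      using y span_repr by simp
    show "orthogonal y v" if "v \<in> repr ` {..<l}" for v
      using that vanish repr(2)[OF _ y] by (auto simp: orthogonal_def inner_commute)
  qed
  then show ?thesis
    by (simp add: orthogonal_def)
qed

text \<open>The component of repr i orthogonal to the other repr j is nonzero by
  independence, and rescaling it gives the required vector.\<close>
lemma dual_vector_exists:
  assumes i: "i < l"
  shows "\<exists>w\<in>h. \<forall>j<l. \<alpha> j w = (if j = i then pi else 0)"
proof -
  define S where "S = repr ` ({..<l} - {i})"
  obtain p z where p: "p \<in> span S" and z: "\<And>w. w \<in> span S \<Longrightarrow> orthogonal z w"
    and decomp: "repr i = p + z"
    using orthogonal_subspace_decomp_exists[of S "repr i"] by metis
  have "span S \<subseteq> h"
    unfolding S_def using repr(1) by (intro span_minimal subspace_h) auto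
  then have zh: "z \<in> h"
    using decomp p repr(1)[OF i] subspace_diff[OF subspace_h] by (metis add_diff_cancel_left' subsetD)
  have "S = repr ` {..<l} - {repr i}"
    unfolding S_def using i by (subst inj_on_image_set_diff[OF inj_on_repr]) auto
  then have "repr i \<notin> span S"
    using independent_repr i unfolding dependent_def by blast
  then have "z \<noteq> 0"
    using decomp p by auto
  have "\<alpha> j z = 0" if "j < l" "j \<noteq> i" for j
  proof -
    have "repr j \<in> span S"
      unfolding S_def using that by (intro span_base) auto
    then have "orthogonal z (repr j)"
      by (rule z)
    then show ?thesis
      using repr(2)[OF that(1) zh] by (simp add: orthogonal_def inner_commute)
  qed
  moreover have "\<alpha> i z = z \<bullet> z"
    using z[OF p] repr(2)[OF i zh] decomp by (simp add: orthogonal_def inner_add_left inner_add_right inner_commute)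
  ultimately have "\<alpha> j ((pi / (z \<bullet> z)) *\<^sub>R z) = (if j = i then pi else 0)" if "j < l" for j
    using that \<open>z \<noteq> 0\<close> linear_functional_on_scale[OF linear_functional zh] by simp
  moreover have "(pi / (z \<bullet> z)) *\<^sub>R z \<in> h"
    using zh subspace_scale[OF subspace_h] by blast
  ultimately show ?thesis
    by blast
qed

lemma ycoroot:
  assumes i: "i < l"
  shows "ycoroot h l \<alpha> i \<in> h"
    "\<And>j. j < l \<Longrightarrow> \<alpha> j (ycoroot h l \<alpha> i) = (if j = i then pi else 0)"
proof -
  let ?P = "\<lambda>y. y \<in> h \<and> (\<forall>j<l. \<alpha> j y = (if j = i then pi else 0))"
  have "\<exists>!y. ?P y"
  proof (rule ex_ex1I)
    show "\<exists>y. ?P y"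
      using dual_vector_exists[OF i] by blast
  next
    fix y y' assume "?P y" "?P y'"
    then have "y - y' = 0"
      by (intro eq_0_if_functionals_vanish)
        (simp_all add: subspace_diff[OF subspace_h] linear_functional_on_diff[OF subspace_h linear_functional])
    then show "y = y'"
      by simp
  qed
  from theI'[OF this] show "ycoroot h l \<alpha> i \<in> h"
    "\<And>j. j < l \<Longrightarrow> \<alpha> j (ycoroot h l \<alpha> i) = (if j = i then pi else 0)"
    unfolding ycoroot_def by blast+
qed

lemma functional_sum_ycoroot:
  assumes j: "j < l"
  shows "\<alpha> j (\<Sum>i<l. e i *\<^sub>R ycoroot h l \<alpha> i) = e j * pi"
proof -
  have "\<alpha> j (\<Sum>i<l. e i *\<^sub>R ycoroot h l \<alpha> i) = (\<Sum>i<l. \<alpha> j (e i *\<^sub>R ycoroot h l \<alpha> i))"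
    by (rule linear_functional_on_sum[OF subspace_h linear_functional[OF j]])
      (simp add: ycoroot(1) subspace_scale[OF subspace_h])
  also have "\<dots> = (\<Sum>i<l. e i * (if j = i then pi else 0))"
    by (intro sum.cong refl)
      (simp add: linear_functional_on_scale[OF linear_functional[OF j] ycoroot(1)] ycoroot(2) j)
  also have "\<dots> = e j * pi"
    using j by (simp add: if_distrib cong: if_cong)
  finally show ?thesis .
qed

lemma sum_ycoroot_in: "(\<Sum>i<l. e i *\<^sub>R ycoroot h l \<alpha> i) \<in> h"
  using ycoroot(1) by (intro subspace_sum[OF subspace_h] subspace_scale[OF subspace_h]) auto

lemma ycoroot_expansion:
  assumes y: "y \<in> h"
  shows "y = (\<Sum>i<l. (\<alpha> i y / pi) *\<^sub>R ycoroot h l \<alpha> i)"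
proof -
  have "y - (\<Sum>i<l. (\<alpha> i y / pi) *\<^sub>R ycoroot h l \<alpha> i) = 0"
    using y sum_ycoroot_in
    by (intro eq_0_if_functionals_vanish)
      (simp_all add: subspace_diff[OF subspace_h] linear_functional_on_diff[OF subspace_h linear_functional]
        functional_sum_ycoroot)
  then show ?thesis
    by simp
qed

lemma in_coroot_lattice_iff:
  assumes y: "y \<in> h"
  shows "(\<forall>i<l. \<exists>m::int. \<alpha> i y = of_int m * pi)
    \<longleftrightarrow> (\<exists>k::nat \<Rightarrow> int. y = (\<Sum>i<l. of_int (k i) *\<^sub>R ycoroot h l \<alpha> i))"
proof
  assume "\<forall>i<l. \<exists>m::int. \<alpha> i y = of_int m * pi"
  then obtain k :: "nat \<Rightarrow> int" where k: "\<And>i. i < l \<Longrightarrow> \<alpha> i y = of_int (k i) * pi"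
    by metis
  have "y = (\<Sum>i<l. of_int (k i) *\<^sub>R ycoroot h l \<alpha> i)"
    by (subst ycoroot_expansion[OF y]) (simp add: k)
  then show "\<exists>k::nat \<Rightarrow> int. y = (\<Sum>i<l. of_int (k i) *\<^sub>R ycoroot h l \<alpha> i)"
    by blast
next
  assume "\<exists>k::nat \<Rightarrow> int. y = (\<Sum>i<l. of_int (k i) *\<^sub>R ycoroot h l \<alpha> i)"
  then show "\<forall>i<l. \<exists>m::int. \<alpha> i y = of_int m * pi"
    using functional_sum_ycoroot by auto
qed

end

lemma simple_roots_dual_space_basis:
  assumes "split_cartan c h" "l = dim h" "simple_roots c h l \<alpha>"
  shows "dual_space_basis h l \<alpha>"
proof
  show "subspace h"
    using assms(1) by (rule split_cartan_subspace)
  show "l = dim h"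
    by fact
next
  fix i assume "i < l"
  then show "linear_functional_on h (\<alpha> i)"
    using assms(3) by (simp add: simple_roots_def is_root_def linear_functional_on_def)
next
  fix a :: "nat \<Rightarrow> real" and i
  assume "\<And>x. x \<in> h \<Longrightarrow> (\<Sum>i<l. a i * \<alpha> i x) = 0" "i < l"
  then show "a i = 0"
    using assms(3) unfolding simple_roots_def by blast
qed

lemma ad_ycoroot_eigenvalue:
  assumes L: "is_lie_algebra c" and sc: "split_cartan c h" and "l = dim h"
    and sr: "simple_roots c h l \<alpha>" and i: "i < l"
    and b: "b \<noteq> 0" "brR c (ycoroot h l \<alpha> i) b = \<mu> *\<^sub>R b"
  shows "\<exists>n::int. \<mu> = of_int n * pi"
proof -
  interpret dual_space_basis h l \<alpha>
    using simple_roots_dual_space_basis[OF sc \<open>l = dim h\<close> sr] .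
  consider "\<mu> = 0" | \<beta> where "is_root c h \<beta>" "\<mu> = \<beta> (ycoroot h l \<alpha> i)"
    using split_cartan_ad_eigenvalue[OF L sc ycoroot(1)[OF i] b] by blast
  then show ?thesis
  proof cases
    case 1
    then show ?thesis
      by (intro exI[of _ 0]) simp
  next
    case 2
    then obtain n :: "nat \<Rightarrow> int" where "\<beta> = (\<lambda>x. \<Sum>j<l. of_int (n j) * \<alpha> j x)"
      using sr unfolding simple_roots_def by blast
    then have "\<mu> = (\<Sum>j<l. of_int (n j) * (if j = i then pi else 0))"
      using 2 ycoroot(2)[OF i] by simp
    also have "\<dots> = of_int (n i) * pi"
      using i by (simp add: if_distrib cong: if_cong)
    finally show ?thesis ..
  qed
qed

section \<open>The exponential map on the complexification\<close>

lemma cplx_add: "cplx (x + y) = cplx x + cplx y"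
  by (simp add: cplx_def vec_eq_iff)

lemma cplx_scaleR: "cplx (a *\<^sub>R x) = a *\<^sub>R cplx x"
  by (simp add: cplx_def vec_eq_iff flip: scaleR_conv_of_real)

lemma linear_cplx: "linear cplx"
  by (rule linearI) (simp_all add: cplx_add cplx_scaleR)

lemma cplx_axis: "cplx (axis j 1) = axis j 1"
  by (simp add: cplx_def axis_def vec_eq_iff)

lemma cplx_eq_0_iff: "cplx x = 0 \<longleftrightarrow> x = 0"
  by (simp add: cplx_def vec_eq_iff)

lemma of_real_smult_cplx: "complex_of_real a *s cplx x = cplx (a *\<^sub>R x)"
  by (simp add: cplx_def vec_eq_iff)

lemma linear_matrix_vector_cplx: "linear (\<lambda>x. M *v cplx x)"
  by (rule linearI)
    (simp_all add: cplx_add cplx_scaleR vec_eq_iff matrix_vector_mult_def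
      distrib_left sum.distrib scaleR_sum_right)

lemma matrix_eq_if_eq_on_real_basis:
  fixes M N :: "complex^'n^'n"
  assumes B: "span B = UNIV" and eq: "\<And>b. b \<in> B \<Longrightarrow> M *v cplx b = N *v cplx b"
  shows "M = N"
proof -
  have MN: "M *v cplx x = N *v cplx x" for x
    using linear_eq_on_span[OF linear_matrix_vector_cplx linear_matrix_vector_cplx eq] B by blast
  have "(M *v axis j 1) $ i = M $ i $ j" for M :: "complex^'n^'n" and i j
    by (simp add: matrix_vector_mult_def axis_def if_distrib[of "(*) _"] cong: if_cong)
  then show ?thesis
    using MN[of "axis _ 1"] by (simp add: cplx_axis vec_eq_iff)
qed

lemma preserves_real_form_if_on_real_basis:
  fixes M :: "complex^'n^'n"
  assumes B: "span B = UNIV" and real: "\<And>b. b \<in> B \<Longrightarrow> M *v cplx b \<in> range cplx"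
  shows "M *v cplx x \<in> range cplx"
proof -
  have "subspace ((\<lambda>x. M *v cplx x) -` range cplx)"
    by (intro linear_subspace_vimage linear_matrix_vector_cplx
        linear_subspace_image linear_cplx subspace_UNIV)
  then have "span B \<subseteq> (\<lambda>x. M *v cplx x) -` range cplx"
    using real by (intro span_minimal) auto
  with B show ?thesis
    by blast
qed

lemma adC_mult_vector: "adC c Z *v W = brC c Z W"
  unfolding adC_def brC_def matrix_vector_mult_def vec_eq_iff
proof
  fix k
  show "(\<chi> i. \<Sum>j\<in>UNIV. (\<chi> k j. \<Sum>i\<in>UNIV. Z $ i * complex_of_real (c i j k)) $ i $ j * W $ j) $ k =
        (\<chi> k. \<Sum>i\<in>UNIV. \<Sum>j\<in>UNIV. Z $ i * W $ j * complex_of_real (c i j k)) $ k"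
    by (simp add: sum_distrib_left sum_distrib_right mult_ac) (rule sum.swap)
qed

lemma adC_cplx: "adC c (w *s cplx y) *v cplx v = w *s cplx (brR c y v)"
  unfolding adC_mult_vector brC_def cplx_def brR_def
  by (simp add: vec_eq_iff sum_distrib_left mult_ac)

definition entrywise_norm :: "complex^'n^'n \<Rightarrow> real" where
  "entrywise_norm M = (\<Sum>i\<in>UNIV. \<Sum>j\<in>UNIV. norm (M $ i $ j))"

lemma norm_le_entrywise_norm: "norm M \<le> entrywise_norm M"
proof -
  have norm_le: "norm v \<le> (\<Sum>i\<in>UNIV. norm (v $ i))" for v :: "'b::real_normed_vector^'n"
    unfolding norm_vec_def by (rule L2_set_le_sum) simp
  then have "norm M \<le> (\<Sum>i\<in>UNIV. norm (M $ i))"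
    by blast
  also have "\<dots> \<le> entrywise_norm M"
    unfolding entrywise_norm_def by (intro sum_mono norm_le)
  finally show ?thesis .
qed

lemma entrywise_norm_nonneg: "0 \<le> entrywise_norm M"
  unfolding entrywise_norm_def by (intro sum_nonneg) simp

lemma entrywise_norm_mult: "entrywise_norm (A ** B) \<le> entrywise_norm A * entrywise_norm B"
proof -
  have "entrywise_norm (A ** B) = (\<Sum>i\<in>UNIV. \<Sum>j\<in>UNIV. norm (\<Sum>k\<in>UNIV. A $ i $ k * B $ k $ j))"
    unfolding entrywise_norm_def matrix_matrix_mult_def by simp
  also have "\<dots> \<le> (\<Sum>i\<in>UNIV. \<Sum>j\<in>UNIV. \<Sum>k\<in>UNIV. norm (A $ i $ k) * norm (B $ k $ j))"
    by (intro sum_mono order_trans[OF norm_sum]) (simp add: norm_mult)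
  also have "\<dots> = (\<Sum>i\<in>UNIV. \<Sum>k\<in>UNIV. norm (A $ i $ k) * (\<Sum>j\<in>UNIV. norm (B $ k $ j)))"
    by (simp add: sum_distrib_left) (rule sum.cong[OF refl], rule sum.swap)
  also have "\<dots> \<le> (\<Sum>i\<in>UNIV. \<Sum>k\<in>UNIV. norm (A $ i $ k) * entrywise_norm B)"
    unfolding entrywise_norm_def
    by (intro sum_mono mult_left_mono member_le_sum) (auto intro: sum_nonneg)
  also have "\<dots> = entrywise_norm A * entrywise_norm B"
    unfolding entrywise_norm_def by (simp add: sum_distrib_right)
  finally show ?thesis .
qed

lemma entrywise_norm_mpow:
  fixes A :: "complex^'n^'n"
  shows "entrywise_norm (mpow A m) \<le> entrywise_norm A ^ m * entrywise_norm (mat 1 :: complex^'n^'n)"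
proof (induction m)
  case (Suc m)
  have "entrywise_norm (mpow A (Suc m)) \<le> entrywise_norm A * entrywise_norm (mpow A m)"
    by (simp add: entrywise_norm_mult)
  also have "\<dots> \<le> entrywise_norm A * (entrywise_norm A ^ m * entrywise_norm (mat 1 :: complex^'n^'n))"
    using Suc by (intro mult_left_mono entrywise_norm_nonneg)
  finally show ?case
    by (simp add: mult_ac)
qed simp

text \<open>The series defining mexp is dominated by the exponential series of entrywise_norm A.\<close>
lemma summable_mexp: "summable (\<lambda>m. (1 / fact m) *\<^sub>R mpow (A::complex^'n^'n) m)"
proof (rule summable_comparison_test)
  let ?g = "\<lambda>m. entrywise_norm (mat 1 :: complex^'n^'n) * (inverse (fact m) * entrywise_norm A ^ m)"
  show "summable ?g"
    by (intro summable_mult summable_exp)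
  have "norm ((1 / fact m) *\<^sub>R mpow A m) \<le> ?g m" for m
    using order_trans[OF norm_le_entrywise_norm entrywise_norm_mpow, of A m]
    by (simp add: field_simps)
  then show "\<exists>N. \<forall>m\<ge>N. norm ((1 / fact m) *\<^sub>R mpow A m) \<le> ?g m"
    by blast
qed

lemma mpow_eigenvector:
  assumes "A *v u = e *s u"
  shows "mpow A m *v u = (e ^ m) *s u"
  by (induction m) (simp_all add: assms matrix_vector_mul_assoc[symmetric] vector_scalar_commute
      vector_smult_assoc mult_ac)

lemma mexp_eigenvector:
  fixes A :: "complex^'n^'n"
  assumes "A *v u = e *s u"
  shows "mexp A *v u = exp e *s u"
proof -
  have "linear (\<lambda>M::complex^'n^'n. M *v u)"
    by (rule linearI)
      (simp_all add: matrix_vector_mult_def vec_eq_iff sum.distrib distrib_right scaleR_sum_right)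
  then have lin_mv: "bounded_linear (\<lambda>M::complex^'n^'n. M *v u)"
    by (simp add: linear_conv_bounded_linear)
  have "linear (\<lambda>z::complex. z *s u)"
    by (rule linearI) (simp_all add: vec_eq_iff distrib_right)
  then have lin_sv: "bounded_linear (\<lambda>z::complex. z *s u)"
    by (simp add: linear_conv_bounded_linear)
  have "(\<lambda>m. ((1 / fact m) *\<^sub>R mpow A m) *v u) sums (mexp A *v u)"
    unfolding mexp_def by (rule bounded_linear.sums[OF lin_mv summable_sums[OF summable_mexp]])
  moreover have "((1 / fact m) *\<^sub>R mpow A m) *v u = (e ^ m /\<^sub>R fact m) *s u" for m
  proof -
    have "((1 / fact m) *\<^sub>R mpow A m) *v u = (1 / fact m) *\<^sub>R (mpow A m *v u)"
      by (simp add: matrix_vector_mult_def vec_eq_iff scaleR_sum_right)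
    then show ?thesis
      using mpow_eigenvector[OF assms, of m] by (simp add: vec_eq_iff divide_inverse_commute)
  qed
  ultimately show ?thesis
    using bounded_linear.sums[OF lin_sv exp_converges[of e]] sums_unique2 by simp
qed

lemma gexp_eigenvector:
  assumes "brR c y b = \<mu> *\<^sub>R b"
  shows "gexp c (w *s cplx y) *v cplx b = exp (w * complex_of_real \<mu>) *s cplx b"
  unfolding gexp_def
  by (rule mexp_eigenvector) (simp add: adC_cplx assms of_real_smult_cplx[symmetric] vector_smult_assoc)

section \<open>The elements exp(i k y_i)\<close>

lemma exp_complex_in_Reals_iff:
  "exp (complex_of_real a + \<i> * complex_of_real b) \<in> \<real> \<longleftrightarrow> (\<exists>m::int. b = of_int m * pi)"
proof -
  have "Im (exp (complex_of_real a + \<i> * complex_of_real b)) = exp a * sin b"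
    by (simp add: Im_exp)
  then show ?thesis
    by (simp add: complex_is_Real_iff sin_zero_iff_int2)
qed

lemma exp_i_times_real_if_sin_eq_0:
  assumes "sin t = 0"
  shows "exp (\<i> * complex_of_real t) = complex_of_real (cos t)" "(cos t)\<^sup>2 = 1"
proof -
  have "exp (\<i> * complex_of_real t) = cis t"
    by (simp add: cis_conv_exp)
  then show "exp (\<i> * complex_of_real t) = complex_of_real (cos t)"
    using assms by (simp add: complex_eq_iff)
  show "(cos t)\<^sup>2 = 1"
    using sin_cos_squared_add[of t] assms by simp
qed

lemma exp_i_odd_pi_neq_1:
  assumes "odd k"
  shows "exp (\<i> * of_int k * complex_of_real pi) \<noteq> 1"
proof
  assume "exp (\<i> * of_int k * complex_of_real pi) = 1"
  then obtain n :: int where "of_int k * pi = of_int (2 * n) * pi"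
    by (auto simp: exp_eq_1)
  then have "k = 2 * n"
    by simp
  with assms show False
    by simp
qed

lemma gexp_mem_adjoint_group: "gexp c Z \<in> adjoint_group c"
  using adjoint_group.step[OF adjoint_group.one, of c Z] by simp

text \<open>On an eigenbasis of ad y with eigenvalues in \<pi>\<int>, exp(i k y) acts by real signs.\<close>
lemma gexp_real_involution:
  fixes y :: "real^'n" and k :: int
  assumes diag: "diagonalizable (brR c y)"
    and eigenvalues:
      "\<forall>b \<mu>. b \<noteq> 0 \<and> brR c y b = \<mu> *\<^sub>R b \<longrightarrow> (\<exists>n::int. \<mu> = of_int n * pi)"
  defines "G \<equiv> gexp c ((\<i> * of_int k) *s cplx y)"
  shows "G \<in> Gtilde c" "G ** G = mat 1"
proof -
  obtain B \<mu> where B: "finite B" "independent B" "span B = UNIV"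
    and eig: "\<And>b. b \<in> B \<Longrightarrow> brR c y b = \<mu> b *\<^sub>R b"
    using diagonalizableE[OF diag] by blast
  have "\<exists>\<sigma>::real. G *v cplx b = complex_of_real \<sigma> *s cplx b \<and> \<sigma>\<^sup>2 = 1" if b: "b \<in> B" for b
  proof -
    have "b \<noteq> 0"
      using B(2) b dependent_zero by blast
    then obtain n :: int where "\<mu> b = of_int n * pi"
      using eigenvalues eig[OF b] by blast
    then have "G *v cplx b = exp (\<i> * complex_of_real (of_int (k * n) * pi)) *s cplx b"
      unfolding G_def gexp_eigenvector[OF eig[OF b]] by (simp add: mult_ac)
    moreover have "sin (of_int (k * n) * pi) = 0"
      using sin_zero_iff_int2 by blast
    ultimately show ?thesis
      using exp_i_times_real_if_sin_eq_0 by metis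
  qed
  then obtain \<sigma> where \<sigma>: "\<And>b. b \<in> B \<Longrightarrow> G *v cplx b = complex_of_real (\<sigma> b) *s cplx b"
    and \<sigma>_sq: "\<And>b. b \<in> B \<Longrightarrow> (\<sigma> b)\<^sup>2 = 1"
    by metis
  have "G *v cplx x \<in> range cplx" for x
    by (rule preserves_real_form_if_on_real_basis[OF B(3)]) (simp add: \<sigma> of_real_smult_cplx)
  then have "\<exists>x'. G *v cplx x = cplx x'" for x
    by blast
  then show "G \<in> Gtilde c"
    unfolding Gtilde_def using gexp_mem_adjoint_group by (simp add: G_def)
  show "G ** G = mat 1"
  proof (rule matrix_eq_if_eq_on_real_basis[OF B(3)])
    fix b assume "b \<in> B"
    then have "(G ** G) *v cplx b = complex_of_real ((\<sigma> b)\<^sup>2) *s cplx b"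
      by (simp add: \<sigma> matrix_vector_mul_assoc[symmetric] vector_scalar_commute vector_smult_assoc
          power2_eq_square)
    then show "(G ** G) *v cplx b = mat 1 *v cplx b"
      using \<sigma>_sq[OF \<open>b \<in> B\<close>] by simp
  qed
qed

lemma gexp_neq_1:
  assumes "brR c y X = pi *\<^sub>R X" "X \<noteq> 0" "odd k"
  shows "gexp c ((\<i> * of_int k) *s cplx y) \<noteq> mat 1"
proof
  assume "gexp c ((\<i> * of_int k) *s cplx y) = mat 1"
  then have "cplx X = exp (\<i> * of_int k * complex_of_real pi) *s cplx X"
    using gexp_eigenvector[OF assms(1), where w = "\<i> * of_int k"] by simp
  then have "(1 - exp (\<i> * of_int k * complex_of_real pi)) *s cplx X = 0"
    by (simp add: vector_sub_rdistrib)
  then have "1 - exp (\<i> * of_int k * complex_of_real pi) = 0 \<or> cplx X = 0"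
    by (simp only: vector_mul_eq_0)
  with assms(2) exp_i_odd_pi_neq_1[OF assms(3)] show False
    by (simp add: cplx_eq_0_iff)
qed

lemma gexp_ycoroot:
  assumes L: "is_lie_algebra c" and sc: "split_cartan c h" and "l = dim h"
    and sr: "simple_roots c h l \<alpha>" and i: "i < l" and k: "odd k"
  defines "G \<equiv> gexp c ((\<i> * of_int k) *s cplx (ycoroot h l \<alpha> i))"
  shows "G \<in> Gtilde c \<and> G ** G = mat 1 \<and> G \<noteq> mat 1"
proof -
  interpret dual_space_basis h l \<alpha>
    using simple_roots_dual_space_basis[OF sc \<open>l = dim h\<close> sr] .
  let ?y = "ycoroot h l \<alpha> i"
  have "is_root c h (\<alpha> i)"
    using sr i by (simp add: simple_roots_def)
  then obtain X where "X \<noteq> 0" "\<forall>H\<in>h. brR c H X = \<alpha> i H *\<^sub>R X"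
    unfolding is_root_def by blast
  then have "brR c ?y X = pi *\<^sub>R X"
    using ycoroot(1)[OF i] ycoroot(2)[OF i i] by simp
  then have "G \<noteq> mat 1"
    unfolding G_def using \<open>X \<noteq> 0\<close> k by (rule gexp_neq_1)
  moreover have "\<forall>b \<mu>. b \<noteq> 0 \<and> brR c ?y b = \<mu> *\<^sub>R b \<longrightarrow> (\<exists>n::int. \<mu> = of_int n * pi)"
    using ad_ycoroot_eigenvalue[OF L sc \<open>l = dim h\<close> sr i] by blast
  then have "G \<in> Gtilde c" "G ** G = mat 1"
    unfolding G_def
    using gexp_real_involution[OF split_cartan_diagonalizable[OF sc ycoroot(1)[OF i]]] by blast+
  ultimately show ?thesis
    by blast
qed

theorem lemma2p2p1:
  fixes c :: "'n::finite \<Rightarrow> 'n \<Rightarrow> 'n \<Rightarrow> real"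
    and h :: "(real^'n) set" and l :: nat and \<alpha> :: "nat \<Rightarrow> real^'n \<Rightarrow> real"
  assumes "semisimple c"
    and "split_cartan c h"
    and "l = dim h"
    and "simple_roots c h l \<alpha>"
  shows "(\<forall>x\<in>h. \<forall>y\<in>h.
            (\<forall>i<l. exp (complex_of_real (\<alpha> i x) + \<i> * complex_of_real (\<alpha> i y)) \<in> \<real>)
            \<longleftrightarrow> (\<exists>k::nat \<Rightarrow> int. y = (\<Sum>i<l. of_int (k i) *\<^sub>R ycoroot h l \<alpha> i)))
       \<and> (\<forall>i<l. \<forall>k::int. odd k \<longrightarrow>
            gexp c ((\<i> * of_int k) *s cplx (ycoroot h l \<alpha> i)) \<in> Gtilde c
          \<and> gexp c ((\<i> * of_int k) *s cplx (ycoroot h l \<alpha> i)) ** gexp c ((\<i> * of_int k) *s cplx (ycoroot h l \<alpha> i)) = mat 1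
          \<and> gexp c ((\<i> * of_int k) *s cplx (ycoroot h l \<alpha> i)) \<noteq> mat 1)"
proof -
  interpret dual_space_basis h l \<alpha>
    using simple_roots_dual_space_basis[OF assms(2-4)] .
  have "is_lie_algebra c"
    using assms(1) by (simp add: semisimple_def)
  then show ?thesis
    using gexp_ycoroot[OF _ assms(2-4)] by (simp add: exp_complex_in_Reals_iff in_coroot_lattice_iff)
qed

end
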